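(* The proportional-cumulative is the unique Level-SP PAF $\psi:\mathcal P^N\to\mathcal P$ satisfying proportionality, where the proportional-cumulative is the PAF whose associated CAF is $$\Psi(\mathbf P)(a)=\operatorname{median}\Big(P_1(a),\dots,P_n(a),\tfrac1n,\tfrac2n,\dots,\tfrac{n-1}n\Big)\quad(a\in\Lambda,\ \mathbf P\in\mathcal C^N).$$
   Context: Let $N=\{1,\dots,n\}$, $\Lambda\subseteq\mathbb R$ a nonempty Borel set, $\mathcal P$ the Borel probability measures on $\Lambda$, $\mathcal C$ the CDFs on $\Lambda$, $\pi(p)(a)=p(\{x\in\Lambda:x\le a\})$. A PAF is a map $\psi:\mathcal P^N\to\mathcal P$ with associated CAF $\Psi$ given by $\Psi(\pi(p_1),\dots,\pi(p_n))=\pi(\psi(p_1,\dots,p_n))$; $P_i=\pi(p_i)$. $\mathbf z_{-i}(z_i')$ is $\mathbf z$ with $i$-th coordinate replaced by $z_i'$. $\psi$ is Level-SP if for every $i$, $\mathbf P$, $P_i'$, $a$: $P_i(a)<\Psi(\mathbf P)(a)\Rightarrow\Psi(\mathbf P)(a)\le\Psi(\mathbf P_{-i}(P_i'))(a)$ and $P_i(a)>\Psi(\mathbf P)(a)\Rightarrow\Psi(\mathbf P)(a)\ge\Psi(\mathbf P_{-i}(P_i'))(a)$. $\psi$ satisfies proportionality if $\psi(\delta_{a_1},\dots,\delta_{a_n})=\frac1n\sum_{i\in N}\delta_{a_i}$ for all $(a_1,\dots,a_n)\in\Lambda^N$, where $\delta_a$ is the Dirac mass at $a$. The median of $2n-1$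 numbers is the $n$-th smallest. *)

theory Defs
  imports "HOL-Probability.Probability"
begin

definition LamSp :: "real set \<Rightarrow> real measure" where
  "LamSp L = restrict_space borel L"

definition Pset :: "real set \<Rightarrow> real measure set" where
  "Pset L = {M. sets M = sets (LamSp L) \<and> prob_space M}"

definition profiles :: "nat \<Rightarrow> real set \<Rightarrow> (nat \<Rightarrow> real measure) set" where
  "profiles n L = PiE {1..n} (\<lambda>_. Pset L)"

definition cdfL :: "real set \<Rightarrow> real measure \<Rightarrow> real \<Rightarrow> real" where
  "cdfL L p a = measure p {x \<in> L. x \<le> a}"

definition is_PAF :: "nat \<Rightarrow> real set \<Rightarrow> ((nat \<Rightarrow> real measure) \<Rightarrow> real measure) \<Rightarrow> bool" where
  "is_PAF n L \<psi> \<longleftrightarrow> (\<forall>p \<in> profiles n L. \<psi> p \<in> Pset L)"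

definition level_SP :: "nat \<Rightarrow> real set \<Rightarrow> ((nat \<Rightarrow> real measure) \<Rightarrow> real measure) \<Rightarrow> bool" where
  "level_SP n L \<psi> \<longleftrightarrow>
     (\<forall>i \<in> {1..n}. \<forall>p \<in> profiles n L. \<forall>q \<in> Pset L. \<forall>a \<in> L.
        (cdfL L (p i) a < cdfL L (\<psi> p) a \<longrightarrow> cdfL L (\<psi> p) a \<le> cdfL L (\<psi> (p(i := q))) a) \<and>
        (cdfL L (p i) a > cdfL L (\<psi> p) a \<longrightarrow> cdfL L (\<psi> p) a \<ge> cdfL L (\<psi> (p(i := q))) a))"

text \<open>Proportionality: psi(delta_{a_1},...,delta_{a_n}) = (1/n) sum_i delta_{a_i}
  (stated by evaluating both measures on every Borel subset of Lambda).\<close>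
definition proportional :: "nat \<Rightarrow> real set \<Rightarrow> ((nat \<Rightarrow> real measure) \<Rightarrow> real measure) \<Rightarrow> bool" where
  "proportional n L \<psi> \<longleftrightarrow>
     (\<forall>a. (\<forall>i \<in> {1..n}. a i \<in> L) \<longrightarrow>
        (\<forall>A \<in> sets (LamSp L).
           measure (\<psi> (\<lambda>i\<in>{1..n}. return (LamSp L) (a i))) A
             = real (card {i \<in> {1..n}. a i \<in> A}) / real n))"

text \<open>Median of the 2n-1 numbers P_1(a),...,P_n(a), 1/n,...,(n-1)/n: the n-th smallest.\<close>
definition pc_median :: "nat \<Rightarrow> (nat \<Rightarrow> real) \<Rightarrow> real" where
  "pc_median n v = sort (map v [1..<n+1] @ map (\<lambda>k. real k / real n) [1..<n]) ! (n - 1)"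

definition is_prop_cumulative :: "nat \<Rightarrow> real set \<Rightarrow> ((nat \<Rightarrow> real measure) \<Rightarrow> real measure) \<Rightarrow> bool" where
  "is_prop_cumulative n L \<psi> \<longleftrightarrow>
     (\<forall>p \<in> profiles n L. \<forall>a \<in> L. cdfL L (\<psi> p) a = pc_median n (\<lambda>i. cdfL L (p i) a))"

end

theory Submission
  imports Defs
begin

text \<open>
  Fix a point a, let y be the value of the aggregate cdf at a and x_i the voters'
  values. A voter with x_i > y can be replaced by the Dirac mass at a without changing y, and any
  voter can be replaced by a Dirac mass at some c > a without raising y (both by
  strategy-proofness, applied also to the reverse move). Doing this to all voters yields a Dirac
  profile, evaluated by proportionality, whence #{i. x_i > y}/n \<le> y; symmetrically
  y \<le> #{i. x_i \<ge> y}/n. For values in [0,1] these two inequalities characterise the median of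
  x_1, ..., x_n, 1/n, ..., (n-1)/n.

  The median of the voters' cdfs is again a cdf, and its increments are dominated by
  those of the sum of the voters' cdfs. The measure it defines plus the measure of the (monotone)
  difference is the sum of the voters' measures, so it vanishes outside Lambda. Strategy-proofness
  and proportionality then reduce to properties of the median.
\<close>

section \<open>Counting characterisation of the phantom median\<close>

lemma length_filter_sort: "length (filter P (sort xs)) = length (filter P xs)"
  by (metis mset_filter mset_sort size_mset)

lemma sort_nth_iff_length_filter:
  fixes xs :: "'a::linorder list"
  assumes k: "k < length xs" and down: "\<And>x y. x \<le> y \<Longrightarrow> P y \<Longrightarrow> P x"
  shows "P (sort xs ! k) \<longleftrightarrow> Suc k \<le> length (filter P xs)"
proof -
  let ?zs = "sort xs"
  let ?I = "{i. i < length ?zs \<and> P (?zs ! i)}"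
  have card_I: "length (filter P xs) = card ?I"
    using length_filter_conv_card[of P ?zs] by (simp add: length_filter_sort)
  have mono: "P (?zs ! i)" if "i \<le> j" "j < length xs" "P (?zs ! j)" for i j
    using down[OF sorted_nth_mono[OF sorted_sort that(1)]] that by simp
  show ?thesis
  proof
    assume "P (?zs ! k)"
    then have "{0..k} \<subseteq> ?I" using k mono by auto
    from card_mono[OF _ this] show "Suc k \<le> length (filter P xs)" by (simp add: card_I)
  next
    assume len: "Suc k \<le> length (filter P xs)"
    show "P (?zs ! k)"
    proof (rule ccontr)
      assume "\<not> P (?zs ! k)"
      then have "?I \<subseteq> {..<k}" using mono[of k] by auto (meson not_le)
      from card_mono[OF _ this] len show False by (simp add: card_I)
    qed
  qed
qed

definition count_sat :: "nat \<Rightarrow> (nat \<Rightarrow> real) \<Rightarrow> (real \<Rightarrow> bool) \<Rightarrow> nat" where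
  "count_sat n v P = card {i \<in> {1..n}. P (v i)}"

definition phantom :: "nat \<Rightarrow> nat \<Rightarrow> real" where
  "phantom n k = real k / real n"

lemma count_sat_mono:
  "(\<And>i. i \<in> {1..n} \<Longrightarrow> P (v i) \<Longrightarrow> Q (w i)) \<Longrightarrow> count_sat n v P \<le> count_sat n w Q"
  unfolding count_sat_def by (rule card_mono) auto

lemma count_sat_le: "count_sat n v P \<le> n"
proof -
  have "{i \<in> {1..n}. P (v i)} \<subseteq> {1..n}" by auto
  from card_mono[OF _ this] show ?thesis by (simp add: count_sat_def)
qed

lemma count_sat_all: "(\<And>i. i \<in> {1..n} \<Longrightarrow> P (v i)) \<Longrightarrow> count_sat n v P = n"
proof -
  assume "\<And>i. i \<in> {1..n} \<Longrightarrow> P (v i)"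
  then have "{i \<in> {1..n}. P (v i)} = {1..n}" by auto
  then show ?thesis by (simp add: count_sat_def)
qed

lemma count_sat_compl: "count_sat n v P + count_sat n v (\<lambda>x. \<not> P x) = n"
proof -
  have "card {i \<in> {1..n}. P (v i)} + card {i \<in> {1..n}. \<not> P (v i)}
      = card ({i \<in> {1..n}. P (v i)} \<union> {i \<in> {1..n}. \<not> P (v i)})"
    by (rule card_Un_disjoint[symmetric]) auto
  also have "{i \<in> {1..n}. P (v i)} \<union> {i \<in> {1..n}. \<not> P (v i)} = {1..n}" by auto
  finally show ?thesis by (simp add: count_sat_def)
qed

lemma length_filter_median_list:
  "length (filter P (map v [1..<n+1] @ map (\<lambda>k. real k / real n) [1..<n]))
     = count_sat n v P + count_sat (n - 1) (phantom n) P"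
proof -
  have "length (filter P (map v [1..<n+1])) = count_sat n v P"
    unfolding count_sat_def length_filter_map
    by (subst distinct_length_filter) (auto intro!: arg_cong[where f=card])
  moreover have "length (filter P (map (\<lambda>k. real k / real n) [1..<n])) = count_sat (n - 1) (phantom n) P"
    unfolding count_sat_def length_filter_map phantom_def
    by (subst distinct_length_filter) (auto intro!: arg_cong[where f=card])
  ultimately show ?thesis by simp
qed

lemma pc_median_iff_count:
  assumes "n \<ge> 1" and "\<And>x y. x \<le> y \<Longrightarrow> P y \<Longrightarrow> P x"
  shows "P (pc_median n v) \<longleftrightarrow> n \<le> count_sat n v P + count_sat (n - 1) (phantom n) P"
proof -
  have "P (pc_median n v) \<longleftrightarrow>
      Suc (n - 1) \<le> length (filter P (map v [1..<n+1] @ map (\<lambda>k. real k / real n) [1..<n]))"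
    unfolding pc_median_def by (rule sort_nth_iff_length_filter) (use assms in simp_all)
  also have "Suc (n - 1) = n" using assms(1) by simp
  finally show ?thesis by (simp only: length_filter_median_list)
qed

lemma pc_median_le_iff:
  "n \<ge> 1 \<Longrightarrow> pc_median n v \<le> s \<longleftrightarrow>
     n \<le> count_sat n v (\<lambda>x. x \<le> s) + count_sat (n - 1) (phantom n) (\<lambda>x. x \<le> s)"
  by (rule pc_median_iff_count) auto

lemma pc_median_less_iff:
  "n \<ge> 1 \<Longrightarrow> pc_median n v < s \<longleftrightarrow>
     n \<le> count_sat n v (\<lambda>x. x < s) + count_sat (n - 1) (phantom n) (\<lambda>x. x < s)"
  by (rule pc_median_iff_count) auto

lemma pc_median_const:
  assumes n: "n \<ge> 1"
  shows "pc_median n (\<lambda>_. c) = c"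
proof -
  have "count_sat n (\<lambda>_. c) (\<lambda>x. x \<le> c) = n" "count_sat n (\<lambda>_. c) (\<lambda>x. x < c) = 0"
    by (simp_all add: count_sat_all) (simp add: count_sat_def)
  then show ?thesis
    using pc_median_le_iff[OF n, of "\<lambda>_. c" c] pc_median_less_iff[OF n, of "\<lambda>_. c" c]
      count_sat_le[of "n - 1" "phantom n" "\<lambda>x. x < c"] n
    by auto
qed

lemma pc_median_shift:
  assumes n: "n \<ge> 1" and d: "d \<ge> 0" and vw: "\<And>i. i \<in> {1..n} \<Longrightarrow> v i \<le> w i + d"
  shows "pc_median n v \<le> pc_median n w + d"
proof -
  let ?s = "pc_median n w"
  have "count_sat n w (\<lambda>x. x \<le> ?s) \<le> count_sat n v (\<lambda>x. x \<le> ?s + d)"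
    by (rule count_sat_mono) (use vw in force)
  moreover have "count_sat (n - 1) (phantom n) (\<lambda>x. x \<le> ?s) \<le> count_sat (n - 1) (phantom n) (\<lambda>x. x \<le> ?s + d)"
    by (rule count_sat_mono) (use d in force)
  ultimately show ?thesis
    using pc_median_le_iff[OF n, of w ?s] pc_median_le_iff[OF n, of v "?s + d"] by linarith
qed

lemma pc_median_mono:
  "n \<ge> 1 \<Longrightarrow> (\<And>i. i \<in> {1..n} \<Longrightarrow> v i \<le> w i) \<Longrightarrow> pc_median n v \<le> pc_median n w"
  using pc_median_shift[of n 0 v w] by simp

lemma pc_median_le_upd:
  assumes n: "n \<ge> 1" and below: "v i < pc_median n v"
  shows "pc_median n v \<le> pc_median n (v(i := t))"
proof (rule ccontr)
  let ?m = "pc_median n v" and ?m' = "pc_median n (v(i := t))"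
  assume "\<not> ?m \<le> ?m'"
  define s where "s = max ?m' (v i)"
  have "count_sat n (v(i := t)) (\<lambda>x. x \<le> s) \<le> count_sat n v (\<lambda>x. x \<le> s)"
    by (rule count_sat_mono) (auto simp: s_def split: if_splits)
  then have "?m \<le> s"
    using pc_median_le_iff[OF n, of "v(i := t)" s] pc_median_le_iff[OF n, of v s]
    by (simp add: s_def)
  with \<open>\<not> ?m \<le> ?m'\<close> below show False by (simp add: s_def)
qed

lemma pc_median_upd_le:
  assumes n: "n \<ge> 1" and above: "pc_median n v < v i"
  shows "pc_median n (v(i := t)) \<le> pc_median n v"
proof (rule ccontr)
  let ?m = "pc_median n v" and ?m' = "pc_median n (v(i := t))"
  assume "\<not> ?m' \<le> ?m"
  define s where "s = min ?m' (v i)"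
  have "count_sat n v (\<lambda>x. x < s) \<le> count_sat n (v(i := t)) (\<lambda>x. x < s)"
    by (rule count_sat_mono) (auto simp: s_def split: if_splits)
  then have "\<not> ?m < s"
    using pc_median_less_iff[OF n, of "v(i := t)" s] pc_median_less_iff[OF n, of v s]
    by (simp add: s_def)
  with \<open>\<not> ?m' \<le> ?m\<close> above show False by (simp add: s_def)
qed

lemma pc_median_nonneg:
  assumes n: "n \<ge> 1" and v: "\<And>i. i \<in> {1..n} \<Longrightarrow> 0 \<le> v i"
  shows "0 \<le> pc_median n v"
proof -
  have "count_sat n v (\<lambda>x. x < 0) = 0" "count_sat (n - 1) (phantom n) (\<lambda>x. x < 0) = 0"
    using v by (auto simp: count_sat_def phantom_def not_less)
  then show ?thesis using pc_median_less_iff[OF n, of v 0] n by simp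
qed

lemma pc_median_le_one:
  assumes n: "n \<ge> 1" and v: "\<And>i. i \<in> {1..n} \<Longrightarrow> v i \<le> 1"
  shows "pc_median n v \<le> 1"
proof -
  have "count_sat n v (\<lambda>x. x \<le> 1) = n" using v by (rule count_sat_all)
  then show ?thesis using pc_median_le_iff[OF n, of v 1] by simp
qed

lemma pc_median_le:
  assumes n: "n \<ge> 1" and v: "\<And>i. i \<in> {1..n} \<Longrightarrow> v i \<le> 1"
    and y: "real (count_sat n v (\<lambda>x. y < x)) / real n \<le> y"
  shows "pc_median n v \<le> y"
proof -
  define A where "A = count_sat n v (\<lambda>x. y < x)"
  have le: "count_sat n v (\<lambda>x. x \<le> y) = n - A"
    using count_sat_compl[of n v "\<lambda>x. x \<le> y"] by (simp add: A_def not_le)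
  have "A < n"
  proof (rule ccontr)
    assume "\<not> A < n"
    then have "A = n" using count_sat_le[of n v "\<lambda>x. y < x"] by (simp add: A_def)
    then have "count_sat n v (\<lambda>x. x \<le> y) = 0" and "1 \<le> y"
      using le y n by (simp_all add: A_def)
    then have "\<not> v 1 \<le> y" using n by (simp add: count_sat_def)
    with \<open>1 \<le> y\<close> v[of 1] n show False by simp
  qed
  have "{1..A} \<subseteq> {j \<in> {1..n - 1}. phantom n j \<le> y}"
  proof
    fix j assume j: "j \<in> {1..A}"
    then have "real j / real n \<le> real A / real n" by (simp add: divide_right_mono)
    with j \<open>A < n\<close> y show "j \<in> {j \<in> {1..n - 1}. phantom n j \<le> y}"
      by (auto simp: phantom_def A_def)
  qed
  from card_mono[OF _ this] have "A \<le> count_sat (n - 1) (phantom n) (\<lambda>x. x \<le> y)"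
    by (simp add: count_sat_def)
  then show ?thesis using pc_median_le_iff[OF n, of v y] le \<open>A < n\<close> by linarith
qed

lemma pc_median_ge:
  assumes n: "n \<ge> 1" and v: "\<And>i. i \<in> {1..n} \<Longrightarrow> 0 \<le> v i"
    and y: "y \<le> real (count_sat n v (\<lambda>x. y \<le> x)) / real n"
  shows "y \<le> pc_median n v"
proof (cases "count_sat n v (\<lambda>x. y \<le> x) = 0")
  case True
  then show ?thesis using y pc_median_nonneg[OF n, of v] v by simp
next
  case False
  define A where "A = count_sat n v (\<lambda>x. y \<le> x)"
  have less: "count_sat n v (\<lambda>x. x < y) = n - A"
    using count_sat_compl[of n v "\<lambda>x. y \<le> x"] by (simp add: A_def not_le)
  have "{j \<in> {1..n - 1}. phantom n j < y} \<subseteq> {1..A - 1}"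
  proof
    fix j assume j: "j \<in> {j \<in> {1..n - 1}. phantom n j < y}"
    then have "real j / real n < real A / real n" using y by (simp add: phantom_def A_def)
    then have "j < A" using n by (simp add: divide_less_cancel)
    with j show "j \<in> {1..A - 1}" by auto
  qed
  from card_mono[OF _ this] have "count_sat (n - 1) (phantom n) (\<lambda>x. x < y) \<le> A - 1"
    by (simp add: count_sat_def)
  then have "\<not> pc_median n v < y"
    using pc_median_less_iff[OF n, of v y] less False count_sat_le[of n v "\<lambda>x. y \<le> x"]
    by (simp add: A_def)
  then show ?thesis by simp
qed

lemma pc_median_eqI:
  assumes "n \<ge> 1" and "\<And>i. i \<in> {1..n} \<Longrightarrow> 0 \<le> v i \<and> v i \<le> 1"
    and "real (count_sat n v (\<lambda>x. y < x)) / real n \<le> y"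
    and "y \<le> real (count_sat n v (\<lambda>x. y \<le> x)) / real n"
  shows "pc_median n v = y"
  using pc_median_le[of n v y] pc_median_ge[of n v y] assms by force

lemma pc_median_indicator:
  assumes n: "n \<ge> 1" and v: "\<And>i. i \<in> {1..n} \<Longrightarrow> v i = 0 \<or> v i = 1"
  shows "pc_median n v = real (count_sat n v (\<lambda>x. x = 1)) / real n"
proof (rule pc_median_eqI[OF n])
  let ?y = "real (count_sat n v (\<lambda>x. x = 1)) / real n"
  have y: "0 \<le> ?y" "?y \<le> 1" using count_sat_le[of n v] by (simp_all add: divide_le_eq)
  show "0 \<le> v i \<and> v i \<le> 1" if "i \<in> {1..n}" for i using v[OF that] by auto
  have "count_sat n v (\<lambda>x. ?y < x) \<le> count_sat n v (\<lambda>x. x = 1)"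
    by (rule count_sat_mono) (metis v y(1) not_less)
  then show "real (count_sat n v (\<lambda>x. ?y < x)) / real n \<le> ?y" by (simp add: divide_right_mono)
  have "count_sat n v (\<lambda>x. x = 1) \<le> count_sat n v (\<lambda>x. ?y \<le> x)"
    by (rule count_sat_mono) (use y in simp)
  then show "?y \<le> real (count_sat n v (\<lambda>x. ?y \<le> x)) / real n" by (simp add: divide_right_mono)
qed

section \<open>Borel probability measures on Lambda and profiles\<close>

lemma space_LamSp [simp]: "space (LamSp L) = L"
  by (simp add: LamSp_def space_restrict_space)

lemma atMost_in_LamSp: "L \<in> sets borel \<Longrightarrow> {x \<in> L. x \<le> a} \<in> sets (LamSp L)"
  unfolding LamSp_def by (subst sets_restrict_space_iff) auto

lemma PsetD:
  assumes "q \<in> Pset L"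
  shows "sets q = sets (LamSp L)" "prob_space q" "space q = L"
  using assms unfolding Pset_def by (auto dest: sets_eq_imp_space_eq)

lemma return_in_Pset: "b \<in> L \<Longrightarrow> return (LamSp L) b \<in> Pset L"
  unfolding Pset_def by (auto intro!: prob_space_return)

lemma cdfL_nonneg: "0 \<le> cdfL L q a"
  by (simp add: cdfL_def)

lemma cdfL_le_one: "q \<in> Pset L \<Longrightarrow> cdfL L q a \<le> 1"
  unfolding cdfL_def using PsetD prob_space.prob_le_1 by blast

lemma cdfL_eq_one:
  assumes q: "q \<in> Pset L" and upper: "\<And>c. c \<in> L \<Longrightarrow> c \<le> a"
  shows "cdfL L q a = 1"
proof -
  have "{x \<in> L. x \<le> a} = space q" using PsetD[OF q] upper by auto
  then show ?thesis unfolding cdfL_def using PsetD(2)[OF q] prob_space.prob_space by metis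
qed

lemma cdfL_return:
  assumes "L \<in> sets borel" "b \<in> L"
  shows "cdfL L (return (LamSp L) b) a = (if b \<le> a then 1 else 0)"
  unfolding cdfL_def using assms by (subst measure_return) (auto simp: atMost_in_LamSp)

lemma profiles_memD: "p \<in> profiles n L \<Longrightarrow> i \<in> {1..n} \<Longrightarrow> p i \<in> Pset L"
  by (auto simp: profiles_def)

lemma profiles_upd: "p \<in> profiles n L \<Longrightarrow> i \<in> {1..n} \<Longrightarrow> q \<in> Pset L \<Longrightarrow> p(i := q) \<in> profiles n L"
  by (auto simp: profiles_def PiE_def extensional_def)

lemma profiles_replace_induct:
  assumes p: "p \<in> profiles n L" and D: "\<And>i. i \<in> {1..n} \<Longrightarrow> D i \<in> Pset L"
    and start: "Inv p"
    and step: "\<And>q i. q \<in> profiles n L \<Longrightarrow> i \<in> {1..n} \<Longrightarrow> q i = p i \<Longrightarrow> Inv q \<Longrightarrow> Inv (q(i := D i))"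
  shows "Inv (\<lambda>i\<in>{1..n}. D i)"
proof -
  have "Inv (\<lambda>i. if i \<in> S then D i else p i)" if "S \<subseteq> {1..n}" for S
  proof -
    from that have "finite S" by (rule finite_subset) simp
    from this that show ?thesis
    proof (induction S rule: finite_induct)
      case empty
      then show ?case using start by simp
    next
      case (insert j S)
      let ?q = "\<lambda>i. if i \<in> S then D i else p i"
      have "?q \<in> profiles n L" using p D insert.prems by (auto simp: profiles_def PiE_def extensional_def)
      moreover have "(\<lambda>i. if i \<in> insert j S then D i else p i) = ?q(j := D j)" by auto
      ultimately show ?case using step[of ?q j] insert by auto
    qed
  qed
  moreover have "(\<lambda>i\<in>{1..n}. D i) = (\<lambda>i. if i \<in> {1..n} then D i else p i)"
    using p by (auto simp: profiles_def PiE_def extensional_def)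
  ultimately show ?thesis by (metis subset_refl)
qed

section \<open>Uniqueness\<close>

locale level_SP_proportional_PAF =
  fixes n :: nat and L :: "real set" and \<psi> :: "(nat \<Rightarrow> real measure) \<Rightarrow> real measure"
  assumes n: "n \<ge> 1" and L_borel: "L \<in> sets borel" and PAF: "is_PAF n L \<psi>"
    and SP: "level_SP n L \<psi>" and proportional: "proportional n L \<psi>"
begin

lemma psi_in_Pset: "q \<in> profiles n L \<Longrightarrow> \<psi> q \<in> Pset L"
  using PAF unfolding is_PAF_def by blast

lemma SP_below:
  "q \<in> profiles n L \<Longrightarrow> i \<in> {1..n} \<Longrightarrow> r \<in> Pset L \<Longrightarrow> a \<in> L \<Longrightarrow>
    cdfL L (q i) a < cdfL L (\<psi> q) a \<Longrightarrow> cdfL L (\<psi> q) a \<le> cdfL L (\<psi> (q(i := r))) a"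
  using SP unfolding level_SP_def by blast

lemma SP_above:
  "q \<in> profiles n L \<Longrightarrow> i \<in> {1..n} \<Longrightarrow> r \<in> Pset L \<Longrightarrow> a \<in> L \<Longrightarrow>
    cdfL L (\<psi> q) a < cdfL L (q i) a \<Longrightarrow> cdfL L (\<psi> (q(i := r))) a \<le> cdfL L (\<psi> q) a"
  using SP unfolding level_SP_def by blast

text \<open>If the move raised the value, voter i could undo it from the profile after the move,
  where her cdf at a is 0, contradicting strategy-proofness there.\<close>

lemma cdf_replace_dirac_above_le:
  assumes q: "q \<in> profiles n L" and i: "i \<in> {1..n}" and a: "a \<in> L" and c: "c \<in> L" "a < c"
  shows "cdfL L (\<psi> (q(i := return (LamSp L) c))) a \<le> cdfL L (\<psi> q) a"
proof -
  let ?q' = "q(i := return (LamSp L) c)"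
  have q': "?q' \<in> profiles n L" using profiles_upd[OF q i return_in_Pset[OF c(1)]] .
  show ?thesis
  proof (cases "cdfL L (q i) a > cdfL L (\<psi> q) a")
    case True
    then show ?thesis using SP_above[OF q i return_in_Pset[OF c(1)] a] by simp
  next
    case False
    have "cdfL L (?q' i) a = 0" using cdfL_return[OF L_borel c(1)] c by simp
    then have "0 < cdfL L (\<psi> ?q') a \<Longrightarrow> cdfL L (\<psi> ?q') a \<le> cdfL L (\<psi> (?q'(i := q i))) a"
      using SP_below[OF q' i profiles_memD[OF q i] a] by simp
    then show ?thesis using False cdfL_nonneg[of L "\<psi> q" a] by force
  qed
qed

lemma cdf_replace_dirac_below_ge:
  assumes q: "q \<in> profiles n L" and i: "i \<in> {1..n}" and a: "a \<in> L" and b: "b \<in> L" "b \<le> a"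
  shows "cdfL L (\<psi> q) a \<le> cdfL L (\<psi> (q(i := return (LamSp L) b))) a"
proof -
  let ?q' = "q(i := return (LamSp L) b)"
  have q': "?q' \<in> profiles n L" using profiles_upd[OF q i return_in_Pset[OF b(1)]] .
  show ?thesis
  proof (cases "cdfL L (q i) a < cdfL L (\<psi> q) a")
    case True
    then show ?thesis using SP_below[OF q i return_in_Pset[OF b(1)] a] by simp
  next
    case False
    have "cdfL L (?q' i) a = 1" using cdfL_return[OF L_borel b(1)] b by simp
    then have "cdfL L (\<psi> ?q') a < 1 \<Longrightarrow> cdfL L (\<psi> (?q'(i := q i))) a \<le> cdfL L (\<psi> ?q') a"
      using SP_above[OF q' i profiles_memD[OF q i] a] by simp
    then show ?thesis using False cdfL_le_one[OF psi_in_Pset[OF q], of a] by force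
  qed
qed

lemma cdf_dirac_profile:
  assumes b: "\<And>i. i \<in> {1..n} \<Longrightarrow> b i \<in> L" and a: "a \<in> L"
  shows "cdfL L (\<psi> (\<lambda>i\<in>{1..n}. return (LamSp L) (b i))) a = real (card {i \<in> {1..n}. b i \<le> a}) / real n"
proof -
  have "{i \<in> {1..n}. b i \<in> {x \<in> L. x \<le> a}} = {i \<in> {1..n}. b i \<le> a}" using b by auto
  then show ?thesis
    using proportional atMost_in_LamSp[OF L_borel, of a] b
    unfolding proportional_def cdfL_def by force
qed

lemma count_above_le_cdf:
  assumes p: "p \<in> profiles n L" and a: "a \<in> L" and c: "c \<in> L" "a < c"
  shows "real (count_sat n (\<lambda>i. cdfL L (p i) a) (\<lambda>x. cdfL L (\<psi> p) a < x)) / real n \<le> cdfL L (\<psi> p) a"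
proof -
  define y where "y = cdfL L (\<psi> p) a"
  define U where "U = {i \<in> {1..n}. y < cdfL L (p i) a}"
  have "cdfL L (\<psi> (\<lambda>i\<in>{1..n}. return (LamSp L) (if i \<in> U then a else c))) a \<le> y"
  proof (rule profiles_replace_induct[OF p])
    fix q i assume q: "q \<in> profiles n L" and i: "i \<in> {1..n}" and "q i = p i"
      and le: "cdfL L (\<psi> q) a \<le> y"
    show "cdfL L (\<psi> (q(i := return (LamSp L) (if i \<in> U then a else c)))) a \<le> y"
    proof (cases "i \<in> U")
      case True
      with \<open>q i = p i\<close> le have "cdfL L (\<psi> q) a < cdfL L (q i) a" by (simp add: U_def)
      then show ?thesis using SP_above[OF q i return_in_Pset[OF a] a] le True by simp
    next
      case False
      then show ?thesis using cdf_replace_dirac_above_le[OF q i a c] le by simp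
    qed
  qed (use a c return_in_Pset y_def in auto)
  moreover have "{i \<in> {1..n}. (if i \<in> U then a else c) \<le> a} = U" using c by (auto simp: U_def)
  ultimately show ?thesis
    using cdf_dirac_profile[of "\<lambda>i. if i \<in> U then a else c" a] a c
    by (simp add: count_sat_def U_def y_def)
qed

lemma cdf_le_count_atLeast:
  assumes p: "p \<in> profiles n L" and a: "a \<in> L" and c: "c \<in> L" "a < c"
  shows "cdfL L (\<psi> p) a \<le> real (count_sat n (\<lambda>i. cdfL L (p i) a) (\<lambda>x. cdfL L (\<psi> p) a \<le> x)) / real n"
proof -
  define y where "y = cdfL L (\<psi> p) a"
  define V where "V = {i \<in> {1..n}. cdfL L (p i) a < y}"
  have "y \<le> cdfL L (\<psi> (\<lambda>i\<in>{1..n}. return (LamSp L) (if i \<in> V then c else a))) a"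
  proof (rule profiles_replace_induct[OF p])
    fix q i assume q: "q \<in> profiles n L" and i: "i \<in> {1..n}" and "q i = p i"
      and ge: "y \<le> cdfL L (\<psi> q) a"
    show "y \<le> cdfL L (\<psi> (q(i := return (LamSp L) (if i \<in> V then c else a)))) a"
    proof (cases "i \<in> V")
      case True
      with \<open>q i = p i\<close> ge have "cdfL L (q i) a < cdfL L (\<psi> q) a" by (simp add: V_def)
      then show ?thesis using SP_below[OF q i return_in_Pset[OF c(1)] a] ge True by simp
    next
      case False
      then show ?thesis using cdf_replace_dirac_below_ge[OF q i a a order_refl] ge by simp
    qed
  qed (use a c return_in_Pset y_def in auto)
  moreover have "{i \<in> {1..n}. (if i \<in> V then c else a) \<le> a} = {i \<in> {1..n}. y \<le> cdfL L (p i) a}"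
    using c by (auto simp: V_def not_less)
  ultimately show ?thesis
    using cdf_dirac_profile[of "\<lambda>i. if i \<in> V then c else a" a] a c
    by (simp add: count_sat_def y_def)
qed

lemma cdf_eq_pc_median:
  assumes p: "p \<in> profiles n L" and a: "a \<in> L"
  shows "cdfL L (\<psi> p) a = pc_median n (\<lambda>i. cdfL L (p i) a)"
proof -
  let ?x = "\<lambda>i. cdfL L (p i) a" and ?y = "cdfL L (\<psi> p) a"
  have "real (count_sat n ?x (\<lambda>x. ?y < x)) / real n \<le> ?y \<and> ?y \<le> real (count_sat n ?x (\<lambda>x. ?y \<le> x)) / real n"
  proof (cases "\<exists>c \<in> L. a < c")
    case True
    then show ?thesis using count_above_le_cdf cdf_le_count_atLeast p a by blast
  next
    case False
    then have "?y = 1" "\<And>i. i \<in> {1..n} \<Longrightarrow> ?x i = 1"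
      using cdfL_eq_one psi_in_Pset[OF p] profiles_memD[OF p] by (meson not_le)+
    moreover from this(2) have "count_sat n ?x (\<lambda>x. 1 \<le> x) = n" by (intro count_sat_all) simp
    ultimately show ?thesis
      using count_sat_le[of n ?x "\<lambda>x. 1 < x"] n by simp
  qed
  moreover have "0 \<le> ?x i \<and> ?x i \<le> 1" if "i \<in> {1..n}" for i
    using cdfL_nonneg cdfL_le_one[OF profiles_memD[OF p that]] by blast
  ultimately show ?thesis by (intro pc_median_eqI[OF n, symmetric]) auto
qed

end

section \<open>Existence\<close>

definition sum_measure :: "'i set \<Rightarrow> ('i \<Rightarrow> real measure) \<Rightarrow> real measure" where
  "sum_measure I M = measure_of UNIV (sets borel) (\<lambda>A. \<Sum>i\<in>I. emeasure (M i) A)"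

lemma sets_sum_measure [simp]: "sets (sum_measure I M) = sets borel"
  unfolding sum_measure_def using sets.sigma_sets_eq[of borel] by (simp add: sets_measure_of_conv)

lemma space_sum_measure [simp]: "space (sum_measure I M) = UNIV"
  by (simp add: sum_measure_def space_measure_of_conv)

lemma emeasure_sum_measure:
  assumes I: "finite I" and M: "\<And>i. i \<in> I \<Longrightarrow> sets (M i) = sets borel" and A: "A \<in> sets borel"
  shows "emeasure (sum_measure I M) A = (\<Sum>i\<in>I. emeasure (M i) A)"
  unfolding sum_measure_def
proof (rule emeasure_measure_of_sigma[OF _ _ _ A])
  show "sigma_algebra UNIV (sets borel)" using sets.sigma_algebra_axioms[of borel] by simp
  show "positive (sets borel) (\<lambda>A. \<Sum>i\<in>I. emeasure (M i) A)" by (simp add: positive_def)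
  show "countably_additive (sets borel) (\<lambda>A. \<Sum>i\<in>I. emeasure (M i) A)"
    unfolding countably_additive_def
  proof (intro allI impI)
    fix F :: "nat \<Rightarrow> real set" assume F: "range F \<subseteq> sets borel" "disjoint_family F"
    have "(\<Sum>j. \<Sum>i\<in>I. emeasure (M i) (F j)) = (\<Sum>i\<in>I. \<Sum>j. emeasure (M i) (F j))"
      by (rule suminf_sum) (rule summableI)
    also have "\<dots> = (\<Sum>i\<in>I. emeasure (M i) (\<Union>j. F j))"
      by (intro sum.cong refl suminf_emeasure) (use F M in auto)
    finally show "(\<Sum>j. \<Sum>i\<in>I. emeasure (M i) (F j)) = (\<Sum>i\<in>I. emeasure (M i) (\<Union>j. F j))" .
  qed
qed

lemma emeasure_sum_finite_borel_measures:
  assumes I: "finite I" and M: "\<And>i. i \<in> I \<Longrightarrow> finite_borel_measure (M i)" and A: "A \<in> sets borel"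
  shows "emeasure (sum_measure I M) A = ennreal (\<Sum>i\<in>I. measure (M i) A)"
proof -
  have "emeasure (sum_measure I M) A = (\<Sum>i\<in>I. emeasure (M i) A)"
    using emeasure_sum_measure[OF I _ A] M finite_borel_measure.M_is_borel by blast
  also have "\<dots> = (\<Sum>i\<in>I. ennreal (measure (M i) A))"
    using M by (intro sum.cong refl) (simp add: finite_borel_measure_def finite_measure.emeasure_eq_measure)
  finally show ?thesis by simp
qed

lemma finite_borel_measure_sum_measure:
  assumes "finite I" and "\<And>i. i \<in> I \<Longrightarrow> finite_borel_measure (M i)"
  shows "finite_borel_measure (sum_measure I M)"
proof -
  interpret finite_measure "sum_measure I M"
    by (rule finite_measureI) (simp add: emeasure_sum_finite_borel_measures[OF assms])
  show ?thesis by unfold_locales simp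
qed

lemma cdf_sum_measure:
  assumes "finite I" and M: "\<And>i. i \<in> I \<Longrightarrow> finite_borel_measure (M i)"
  shows "cdf (sum_measure I M) x = (\<Sum>i\<in>I. cdf (M i) x)"
  using emeasure_sum_finite_borel_measures[OF assms, where A="{..x}"] M
  by (simp add: cdf_def measure_def sum_nonneg)

definition to_borel :: "real measure \<Rightarrow> real measure" where
  "to_borel q = distr q borel (\<lambda>x. x)"

lemma sets_to_borel [simp]: "sets (to_borel q) = sets borel"
  by (simp add: to_borel_def)

lemma measurable_ident_Pset: "q \<in> Pset L \<Longrightarrow> (\<lambda>x. x) \<in> measurable q borel"
  using measurable_restrict_space1[OF measurable_ident_sets[of borel borel]] PsetD(1)[of q L]
  by (simp add: LamSp_def cong: measurable_cong_sets)

lemma real_distribution_to_borel: "q \<in> Pset L \<Longrightarrow> real_distribution (to_borel q)"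
  unfolding to_borel_def using PsetD(2) measurable_ident_Pset by (metis prob_space.real_distribution_distr)

lemma cdf_to_borel: "q \<in> Pset L \<Longrightarrow> cdf (to_borel q) = cdfL L q"
  unfolding to_borel_def cdf_def cdfL_def fun_eq_iff using PsetD(3)[of q L]
  by (subst measure_distr) (auto simp: measurable_ident_Pset intro!: arg_cong[where f="measure q"])

lemma emeasure_to_borel_compl: "q \<in> Pset L \<Longrightarrow> L \<in> sets borel \<Longrightarrow> emeasure (to_borel q) (UNIV - L) = 0"
  unfolding to_borel_def using PsetD(3)[of q L]
  by (subst emeasure_distr) (auto simp: measurable_ident_Pset Int_absorb2 Diff_Int_distrib2)

lemma finite_borel_measure_to_borel: "q \<in> Pset L \<Longrightarrow> finite_borel_measure (to_borel q)"
  using real_distribution.finite_borel_measure_M real_distribution_to_borel by blast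

lemma cdfL_mono: "q \<in> Pset L \<Longrightarrow> x \<le> y \<Longrightarrow> cdfL L q x \<le> cdfL L q y"
  using finite_borel_measure.cdf_nondecreasing[OF finite_borel_measure_to_borel]
  by (simp add: cdf_to_borel)

lemma cdfL_right_cont: "q \<in> Pset L \<Longrightarrow> (cdfL L q \<longlongrightarrow> cdfL L q a) (at_right a)"
  using finite_borel_measure.cdf_is_right_cont[OF finite_borel_measure_to_borel]
  by (simp add: cdf_to_borel continuous_within)

lemma cdfL_at_bot: "q \<in> Pset L \<Longrightarrow> (cdfL L q \<longlongrightarrow> 0) at_bot"
  using finite_borel_measure.cdf_lim_at_bot[OF finite_borel_measure_to_borel]
  by (simp add: cdf_to_borel)

lemma cdfL_at_top: "q \<in> Pset L \<Longrightarrow> (cdfL L q \<longlongrightarrow> 1) at_top"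
  using real_distribution.cdf_lim_at_top_prob[OF real_distribution_to_borel]
  by (simp add: cdf_to_borel)

definition pc_cdf :: "nat \<Rightarrow> real set \<Rightarrow> (nat \<Rightarrow> real measure) \<Rightarrow> real \<Rightarrow> real" where
  "pc_cdf n L p x = pc_median n (\<lambda>i. cdfL L (p i) x)"

definition cdf_sum :: "nat \<Rightarrow> real set \<Rightarrow> (nat \<Rightarrow> real measure) \<Rightarrow> real \<Rightarrow> real" where
  "cdf_sum n L p x = (\<Sum>i\<in>{1..n}. cdfL L (p i) x)"

context
  fixes n :: nat and L :: "real set" and p :: "nat \<Rightarrow> real measure"
  assumes n: "n \<ge> 1" and p: "p \<in> profiles n L"
begin

lemma pc_cdf_mono: "x \<le> y \<Longrightarrow> pc_cdf n L p x \<le> pc_cdf n L p y"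
  unfolding pc_cdf_def by (rule pc_median_mono[OF n]) (simp add: cdfL_mono profiles_memD[OF p])

text \<open>The phantom median is 1-Lipschitz for the sup norm.\<close>

lemma pc_cdf_increment_le: "x \<le> y \<Longrightarrow> pc_cdf n L p y - pc_cdf n L p x \<le> cdf_sum n L p y - cdf_sum n L p x"
proof -
  assume xy: "x \<le> y"
  let ?d = "\<lambda>i. cdfL L (p i) y - cdfL L (p i) x"
  have d: "0 \<le> ?d i" if "i \<in> {1..n}" for i using cdfL_mono[OF profiles_memD[OF p that] xy] by simp
  have "pc_cdf n L p y \<le> pc_cdf n L p x + sum ?d {1..n}"
    unfolding pc_cdf_def
  proof (rule pc_median_shift[OF n])
    show "0 \<le> sum ?d {1..n}" by (rule sum_nonneg) (rule d)
    show "cdfL L (p i) y \<le> cdfL L (p i) x + sum ?d {1..n}" if "i \<in> {1..n}" for i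
      using member_le_sum[OF that, of ?d] d by simp
  qed
  then show ?thesis by (simp add: cdf_sum_def sum_subtractf)
qed

lemma cdf_sum_right_cont: "(cdf_sum n L p \<longlongrightarrow> cdf_sum n L p a) (at_right a)"
  unfolding cdf_sum_def[abs_def] using cdfL_right_cont profiles_memD[OF p] by (intro tendsto_sum) blast

lemma pc_cdf_right_cont: "continuous (at_right a) (pc_cdf n L p)"
  unfolding continuous_within
proof (rule tendsto_sandwich)
  show "\<forall>\<^sub>F x in at_right a. pc_cdf n L p a \<le> pc_cdf n L p x"
    using eventually_at_right_less[of a] by eventually_elim (simp add: pc_cdf_mono)
  show "\<forall>\<^sub>F x in at_right a. pc_cdf n L p x \<le> pc_cdf n L p a + (cdf_sum n L p x - cdf_sum n L p a)"
    using eventually_at_right_less[of a]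
  proof eventually_elim
    case (elim x)
    then show ?case using pc_cdf_increment_le[of a x] by simp
  qed
  show "((\<lambda>x. pc_cdf n L p a + (cdf_sum n L p x - cdf_sum n L p a)) \<longlongrightarrow> pc_cdf n L p a) (at_right a)"
  proof -
    have "((\<lambda>x. pc_cdf n L p a + (cdf_sum n L p x - cdf_sum n L p a))
        \<longlongrightarrow> pc_cdf n L p a + (cdf_sum n L p a - cdf_sum n L p a)) (at_right a)"
      by (rule tendsto_add[OF tendsto_const tendsto_diff[OF cdf_sum_right_cont tendsto_const]])
    then show ?thesis by simp
  qed
qed (rule tendsto_const)

lemma pc_cdf_nonneg: "0 \<le> pc_cdf n L p x"
  unfolding pc_cdf_def by (rule pc_median_nonneg[OF n]) (rule cdfL_nonneg)

lemma pc_cdf_le_one: "pc_cdf n L p x \<le> 1"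
  unfolding pc_cdf_def by (rule pc_median_le_one[OF n]) (simp add: cdfL_le_one profiles_memD[OF p])

lemma pc_cdf_le_cdf_sum: "pc_cdf n L p x \<le> cdf_sum n L p x"
proof -
  have "pc_cdf n L p x \<le> pc_median n (\<lambda>_. 0) + cdf_sum n L p x"
    unfolding pc_cdf_def
  proof (rule pc_median_shift[OF n])
    show "0 \<le> cdf_sum n L p x" unfolding cdf_sum_def by (rule sum_nonneg) (rule cdfL_nonneg)
    show "cdfL L (p i) x \<le> 0 + cdf_sum n L p x" if "i \<in> {1..n}" for i
      using member_le_sum[OF that, of "\<lambda>i. cdfL L (p i) x"] by (simp add: cdf_sum_def cdfL_nonneg)
  qed
  then show ?thesis by (simp add: pc_median_const[OF n])
qed

lemma pc_cdf_ge: "1 - (real n - cdf_sum n L p x) \<le> pc_cdf n L p x"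
proof -
  let ?d = "\<lambda>i. 1 - cdfL L (p i) x"
  have d: "0 \<le> ?d i" if "i \<in> {1..n}" for i using cdfL_le_one[OF profiles_memD[OF p that]] by simp
  have "1 \<le> pc_cdf n L p x + sum ?d {1..n}"
    unfolding pc_cdf_def
  proof (rule order_trans[OF eq_refl[OF pc_median_const[OF n, symmetric]] pc_median_shift[OF n]])
    show "0 \<le> sum ?d {1..n}" by (rule sum_nonneg) (rule d)
    show "1 \<le> cdfL L (p i) x + sum ?d {1..n}" if "i \<in> {1..n}" for i
      using member_le_sum[OF that, of ?d] d by simp
  qed
  then show ?thesis by (simp add: cdf_sum_def sum_subtractf)
qed

lemma cdf_sum_at_bot: "(cdf_sum n L p \<longlongrightarrow> 0) at_bot"
proof -
  have "(cdf_sum n L p \<longlongrightarrow> (\<Sum>i\<in>{1..n}. 0)) at_bot"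
    unfolding cdf_sum_def[abs_def] using cdfL_at_bot profiles_memD[OF p] by (intro tendsto_sum) blast
  then show ?thesis by simp
qed

lemma cdf_sum_at_top: "(cdf_sum n L p \<longlongrightarrow> real n) at_top"
proof -
  have "(cdf_sum n L p \<longlongrightarrow> (\<Sum>i\<in>{1..n}. 1)) at_top"
    unfolding cdf_sum_def[abs_def] using cdfL_at_top profiles_memD[OF p] by (intro tendsto_sum) blast
  then show ?thesis by simp
qed

lemma pc_cdf_at_bot: "(pc_cdf n L p \<longlongrightarrow> 0) at_bot"
  by (rule tendsto_sandwich[where f="\<lambda>_. 0" and h="cdf_sum n L p"])
     (auto simp: pc_cdf_nonneg pc_cdf_le_cdf_sum cdf_sum_at_bot)

lemma pc_cdf_at_top: "(pc_cdf n L p \<longlongrightarrow> 1) at_top"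
proof (rule tendsto_sandwich[where f="\<lambda>x. 1 - (real n - cdf_sum n L p x)" and h="\<lambda>_. 1"])
  have "((\<lambda>x. 1 - (real n - cdf_sum n L p x)) \<longlongrightarrow> 1 - (real n - real n)) at_top"
    by (rule tendsto_diff[OF tendsto_const tendsto_diff[OF tendsto_const cdf_sum_at_top]])
  then show "((\<lambda>x. 1 - (real n - cdf_sum n L p x)) \<longlongrightarrow> 1) at_top" by simp
qed (auto simp: pc_cdf_ge pc_cdf_le_one)

lemma real_distribution_pc_cdf: "real_distribution (interval_measure (pc_cdf n L p))"
  by (rule real_distribution_interval_measure)
     (use pc_cdf_mono pc_cdf_right_cont pc_cdf_at_bot pc_cdf_at_top in auto)

lemma cdf_interval_measure_pc_cdf: "cdf (interval_measure (pc_cdf n L p)) = pc_cdf n L p"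
  by (rule cdf_interval_measure) (use pc_cdf_mono pc_cdf_right_cont pc_cdf_at_bot in auto)

lemma sum_measure_pc_cdf_gap:
  "sum_measure {0::nat, 1} (\<lambda>j. if j = 0 then interval_measure (pc_cdf n L p)
      else interval_measure (\<lambda>x. cdf_sum n L p x - pc_cdf n L p x))
   = sum_measure {1..n} (\<lambda>i. to_borel (p i))"
  (is "sum_measure _ ?M = sum_measure _ ?V")
proof -
  let ?g = "\<lambda>x. cdf_sum n L p x - pc_cdf n L p x"
  have g_mono: "?g x \<le> ?g y" if "x \<le> y" for x y using pc_cdf_increment_le[OF that] by simp
  have g_rc: "continuous (at_right a) ?g" for a
    using continuous_diff[OF cdf_sum_right_cont[unfolded continuous_within[symmetric]] pc_cdf_right_cont] .
  have "(?g \<longlongrightarrow> 0 - 0) at_bot" by (rule tendsto_diff[OF cdf_sum_at_bot pc_cdf_at_bot])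
  then have g_bot: "(?g \<longlongrightarrow> 0) at_bot" by simp
  have g_top: "(?g \<longlongrightarrow> real n - 1) at_top" by (rule tendsto_diff[OF cdf_sum_at_top pc_cdf_at_top])
  have g_fbm: "finite_borel_measure (interval_measure ?g)"
    by (rule finite_borel_measure_interval_measure[OF g_mono g_rc g_bot g_top]) (use n in auto)
  have M: "finite_borel_measure (?M j)" if "j \<in> {0, 1}" for j
    using real_distribution.finite_borel_measure_M[OF real_distribution_pc_cdf] g_fbm by simp
  have V: "finite_borel_measure (?V i)" if "i \<in> {1..n}" for i
    using finite_borel_measure_to_borel[OF profiles_memD[OF p that]] .
  show ?thesis
  proof (rule cdf_unique'[OF finite_borel_measure_sum_measure[OF _ M] finite_borel_measure_sum_measure[OF _ V]])
    have g_cdf: "cdf (interval_measure ?g) = ?g" by (rule cdf_interval_measure[OF g_mono g_rc g_bot])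
    show "cdf (sum_measure {0, 1} ?M) = cdf (sum_measure {1..n} ?V)"
    proof
      fix x
      have "cdf (sum_measure {0, 1} ?M) x = pc_cdf n L p x + ?g x"
        using cdf_sum_measure[of "{0, 1}" ?M x] M by (simp add: g_cdf cdf_interval_measure_pc_cdf)
      also have "\<dots> = (\<Sum>i\<in>{1..n}. cdf (?V i) x)"
        using cdf_to_borel[OF profiles_memD[OF p]] by (simp add: cdf_sum_def)
      also have "\<dots> = cdf (sum_measure {1..n} ?V) x"
        using cdf_sum_measure[of "{1..n}" ?V x] V by simp
      finally show "cdf (sum_measure {0, 1} ?M) x = cdf (sum_measure {1..n} ?V) x" .
    qed
  qed simp_all
qed

end

definition prop_cumulative :: "nat \<Rightarrow> real set \<Rightarrow> (nat \<Rightarrow> real measure) \<Rightarrow> real measure" where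
  "prop_cumulative n L p = restrict_space (interval_measure (pc_cdf n L p)) L"

context
  fixes n :: nat and L :: "real set" and p :: "nat \<Rightarrow> real measure"
  assumes n: "n \<ge> 1" and L_borel: "L \<in> sets borel" and p: "p \<in> profiles n L"
begin

lemma emeasure_pc_cdf_compl: "emeasure (interval_measure (pc_cdf n L p)) (UNIV - L) = 0"
proof -
  have "emeasure (interval_measure (pc_cdf n L p)) (UNIV - L)
      \<le> emeasure (sum_measure {0::nat, 1} (\<lambda>j. if j = 0 then interval_measure (pc_cdf n L p)
           else interval_measure (\<lambda>x. cdf_sum n L p x - pc_cdf n L p x))) (UNIV - L)"
    using L_borel by (subst emeasure_sum_measure) auto
  also have "\<dots> = (\<Sum>i\<in>{1..n}. emeasure (to_borel (p i)) (UNIV - L))"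
    unfolding sum_measure_pc_cdf_gap[OF n p] using L_borel by (intro emeasure_sum_measure) auto
  also have "\<dots> = 0"
    using emeasure_to_borel_compl[OF profiles_memD[OF p] L_borel] by simp
  finally show ?thesis by simp
qed

lemma prop_cumulative_in_Pset: "prop_cumulative n L p \<in> Pset L"
proof -
  interpret real_distribution "interval_measure (pc_cdf n L p)" by (rule real_distribution_pc_cdf[OF n p])
  have "prob (UNIV - L) = 0" using emeasure_pc_cdf_compl by (simp add: emeasure_eq_measure)
  then have "emeasure (interval_measure (pc_cdf n L p)) L = 1"
    using prob_compl[of L] L_borel by (simp add: emeasure_eq_measure)
  then show ?thesis
    unfolding Pset_def prop_cumulative_def LamSp_def
    using L_borel by (auto simp: sets_restrict_space intro!: prob_space_restrict_space)
qed

lemma measure_prop_cumulative: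
  "A \<in> sets borel \<Longrightarrow> A \<subseteq> L \<Longrightarrow> measure (prop_cumulative n L p) A = measure (interval_measure (pc_cdf n L p)) A"
  unfolding prop_cumulative_def using L_borel by (subst measure_restrict_space) auto

lemma cdfL_prop_cumulative: "cdfL L (prop_cumulative n L p) a = pc_cdf n L p a"
proof -
  have null: "UNIV - L \<in> null_sets (interval_measure (pc_cdf n L p))"
    using emeasure_pc_cdf_compl L_borel by (auto simp: null_sets_def)
  have "cdfL L (prop_cumulative n L p) a = measure (interval_measure (pc_cdf n L p)) {x \<in> L. x \<le> a}"
    unfolding cdfL_def using L_borel by (intro measure_prop_cumulative) auto
  also have "{x \<in> L. x \<le> a} = {..a} - (UNIV - L)" by auto
  also have "measure (interval_measure (pc_cdf n L p)) \<dots> = measure (interval_measure (pc_cdf n L p)) {..a}"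
    by (rule measure_Diff_null_set[OF _ null]) simp
  also have "\<dots> = pc_cdf n L p a"
    using cdf_interval_measure_pc_cdf[OF n p] by (simp add: cdf_def fun_eq_iff)
  finally show ?thesis .
qed

end

lemma level_SP_prop_cumulative:
  assumes n: "n \<ge> 1" and L_borel: "L \<in> sets borel"
  shows "level_SP n L (prop_cumulative n L)"
  unfolding level_SP_def
proof (intro ballI conjI impI)
  fix i p q a assume i: "i \<in> {1..n}" and p: "p \<in> profiles n L" and q: "q \<in> Pset L" and "a \<in> L"
  let ?v = "\<lambda>j. cdfL L (p j) a"
  have "(\<lambda>j. cdfL L ((p(i := q)) j) a) = ?v(i := cdfL L q a)" by auto
  then have cdf_upd: "cdfL L (prop_cumulative n L (p(i := q))) a = pc_median n (?v(i := cdfL L q a))"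
    using cdfL_prop_cumulative[OF n L_borel profiles_upd[OF p i q]] by (simp add: pc_cdf_def)
  have cdf: "cdfL L (prop_cumulative n L p) a = pc_median n ?v"
    using cdfL_prop_cumulative[OF n L_borel p] by (simp add: pc_cdf_def)
  show "cdfL L (prop_cumulative n L p) a \<le> cdfL L (prop_cumulative n L (p(i := q))) a"
    if "cdfL L (p i) a < cdfL L (prop_cumulative n L p) a"
    using pc_median_le_upd[OF n, of ?v i] that cdf cdf_upd by simp
  show "cdfL L (prop_cumulative n L (p(i := q))) a \<le> cdfL L (prop_cumulative n L p) a"
    if "cdfL L (p i) a > cdfL L (prop_cumulative n L p) a"
    using pc_median_upd_le[OF n, of ?v i] that cdf cdf_upd by simp
qed

lemma proportional_prop_cumulative:
  assumes n: "n \<ge> 1" and L_borel: "L \<in> sets borel"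
  shows "proportional n L (prop_cumulative n L)"
  unfolding proportional_def
proof (intro allI impI ballI)
  fix b :: "nat \<Rightarrow> real" and A assume b: "\<forall>i\<in>{1..n}. b i \<in> L" and A: "A \<in> sets (LamSp L)"
  let ?p = "\<lambda>i\<in>{1..n}. return (LamSp L) (b i)"
  have p: "?p \<in> profiles n L" unfolding profiles_def using b return_in_Pset by auto
  have A_sub: "A \<subseteq> L" "A \<in> sets borel"
    using A L_borel unfolding LamSp_def by (auto simp: sets_restrict_space_iff)
  define U where "U = distr (measure_pmf (pmf_of_set {1..n})) borel b"
  have "{1..n} \<noteq> {}" using n by auto
  then have measure_U: "measure U B = real (card {i \<in> {1..n}. b i \<in> B}) / real n" if "B \<in> sets borel" for B
    unfolding U_def using that by (subst measure_distr) (auto simp: measure_pmf_of_set vimage_def Int_def)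
  have "interval_measure (pc_cdf n L ?p) = U"
  proof (rule cdf_unique[OF real_distribution_pc_cdf[OF n p]])
    show "real_distribution U" unfolding U_def
      by (rule prob_space.real_distribution_distr) (auto simp: measure_pmf.prob_space_axioms)
    have cdf_p: "cdfL L (return (LamSp L) (b i)) x = (if b i \<le> x then 1 else 0)" if "i \<in> {1..n}" for i x
      using cdfL_return[OF L_borel] b that by simp
    have "pc_cdf n L ?p x = real (count_sat n (\<lambda>i. cdfL L (?p i) x) (\<lambda>z. z = 1)) / real n" for x
      unfolding pc_cdf_def by (rule pc_median_indicator[OF n]) (simp add: cdf_p)
    moreover have "count_sat n (\<lambda>i. cdfL L (?p i) x) (\<lambda>z. z = 1) = card {i \<in> {1..n}. b i \<in> {..x}}" for x
      unfolding count_sat_def using cdf_p by (intro arg_cong[where f=card]) auto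
    ultimately have "pc_cdf n L ?p x = real (card {i \<in> {1..n}. b i \<in> {..x}}) / real n" for x
      by simp
    then show "cdf (interval_measure (pc_cdf n L ?p)) = cdf U"
      using cdf_interval_measure_pc_cdf[OF n p] measure_U by (simp add: cdf_def fun_eq_iff)
  qed
  then show "measure (prop_cumulative n L ?p) A = real (card {i \<in> {1..n}. b i \<in> A}) / real n"
    using measure_prop_cumulative[OF n L_borel p A_sub(2,1)] measure_U[OF A_sub(2)] by simp
qed

theorem mainTheorem14:
  fixes n :: nat and L :: "real set"
  assumes "n \<ge> 1" and "L \<in> sets borel" and "L \<noteq> {}"
  shows "(\<exists>\<psi>. is_PAF n L \<psi> \<and> is_prop_cumulative n L \<psi> \<and> level_SP n L \<psi> \<and> proportional n L \<psi>)
       \<and> (\<forall>\<psi>. is_PAF n L \<psi> \<and> level_SP n L \<psi> \<and> proportional n L \<psi> \<longrightarrow> is_prop_cumulative n L \<psi>)"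
proof
  show "\<exists>\<psi>. is_PAF n L \<psi> \<and> is_prop_cumulative n L \<psi> \<and> level_SP n L \<psi> \<and> proportional n L \<psi>"
  proof (intro exI conjI)
    show "is_PAF n L (prop_cumulative n L)"
      unfolding is_PAF_def using prop_cumulative_in_Pset[OF assms(1,2)] by blast
    show "is_prop_cumulative n L (prop_cumulative n L)"
      unfolding is_prop_cumulative_def using cdfL_prop_cumulative[OF assms(1,2)] by (simp add: pc_cdf_def)
  qed (use level_SP_prop_cumulative proportional_prop_cumulative assms in auto)
  show "\<forall>\<psi>. is_PAF n L \<psi> \<and> level_SP n L \<psi> \<and> proportional n L \<psi> \<longrightarrow> is_prop_cumulative n L \<psi>"
  proof (intro allI impI)
    fix \<psi> assume "is_PAF n L \<psi> \<and> level_SP n L \<psi> \<and> proportional n L \<psi>"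
    then interpret level_SP_proportional_PAF n L \<psi> using assms by unfold_locales auto
    show "is_prop_cumulative n L \<psi>" unfolding is_prop_cumulative_def using cdf_eq_pc_median by blast
  qed
qed

end
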